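(* Let $F$ be an integral form, and assume that $F$ has a simple linear factor over $\mathbb{Q}_p$, i.e. there is a non-zero linear form $L$ with coefficients in $\mathbb{Q}_p$ such that $L$ divides $F$ but $L^2$ does not divide $F$ in $\mathbb{Q}_p[x_0,\dots,x_r]$. Then $R(F)$ is dense in $\mathbb{Q}_p$.
   Context: An integral form is a homogeneous polynomial with integer coefficients. For an integral form $F$ in $r+1$ variables, $R(F)=\{F(\overline{x})/F(\overline{y}) : \overline{x},\overline{y}\in\mathbb{Z}^{r+1},\ F(\overline{y})\neq 0\}$; density is in the $p$-adic topology. *)

theory Defs
  imports "HOL-Library.Poly_Mapping" "HOL-Computational_Algebra.Fraction_Field"
    "HOL-Computational_Algebra.Primes" "HOL-Library.Cardinality"
begin

class prime_card = finite +
  assumes prime_card: "prime CARD('a)"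

lemma prime_card_gt1: "int CARD('a::prime_card) > 1"
  using prime_card[where 'a='a] prime_gt_1_nat by auto

definition padic_seqs :: "int \<Rightarrow> (nat \<Rightarrow> int) set" where
  "padic_seqs p = {f. \<forall>n. 0 \<le> f n \<and> f n < p ^ n \<and> f (Suc n) mod (p ^ n) = f n}"

lemma padic_seqs_const: "p > 0 \<Longrightarrow> (\<lambda>n. x mod p ^ n) \<in> padic_seqs p"
  by (auto simp: padic_seqs_def mod_mod_cancel le_imp_power_dvd)

lemma padic_seqs_op:
  fixes p :: int and h :: "int \<Rightarrow> int \<Rightarrow> int"
  assumes p: "p > 0" and f: "f \<in> padic_seqs p" and g: "g \<in> padic_seqs p"
    and h: "\<And>a b m. h (a mod m) (b mod m) mod m = h a b mod m"
  shows "(\<lambda>n. h (f n) (g n) mod p ^ n) \<in> padic_seqs p"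
  unfolding padic_seqs_def
proof (intro CollectI allI conjI)
  fix n
  show "0 \<le> h (f n) (g n) mod p ^ n" using p by simp
  show "h (f n) (g n) mod p ^ n < p ^ n" using p by simp
  have d: "p ^ n dvd p ^ Suc n" by (simp add: le_imp_power_dvd)
  have "h (f (Suc n)) (g (Suc n)) mod p ^ Suc n mod p ^ n = h (f (Suc n)) (g (Suc n)) mod p ^ n"
    using d by (simp add: mod_mod_cancel)
  also have "\<dots> = h (f (Suc n) mod p ^ n) (g (Suc n) mod p ^ n) mod p ^ n" by (simp add: h)
  also have "\<dots> = h (f n) (g n) mod p ^ n" using f g by (simp add: padic_seqs_def)
  finally show "h (f (Suc n)) (g (Suc n)) mod p ^ Suc n mod p ^ n = h (f n) (g n) mod p ^ n" .
qed

typedef ('p::prime_card) padic_int = "padic_seqs (int CARD('p))"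
  morphisms padic_digits Abs_padic_int
  by (rule exI[of _ "\<lambda>_. 0"]) (simp add: padic_seqs_def)

setup_lifting type_definition_padic_int

lemma card_pos: "int CARD('a::prime_card) > 0"
  using prime_card_gt1[where 'a='a] by simp

instantiation padic_int :: (prime_card) comm_ring_1
begin

lift_definition zero_padic_int :: "'a padic_int" is "\<lambda>_. 0" by (simp add: padic_seqs_def)
lift_definition one_padic_int :: "'a padic_int" is "\<lambda>n. 1 mod (int CARD('a) ^ n)"
  by (rule padic_seqs_const[OF card_pos])
lift_definition plus_padic_int :: "'a padic_int \<Rightarrow> 'a padic_int \<Rightarrow> 'a padic_int"
  is "\<lambda>f g n. (f n + g n) mod (int CARD('a) ^ n)"
  by (rule padic_seqs_op[OF card_pos, where h="(+)"]) (auto simp: mod_add_eq)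
lift_definition times_padic_int :: "'a padic_int \<Rightarrow> 'a padic_int \<Rightarrow> 'a padic_int"
  is "\<lambda>f g n. (f n * g n) mod (int CARD('a) ^ n)"
  by (rule padic_seqs_op[OF card_pos, where h="(*)"]) (auto simp: mod_mult_eq)
lift_definition uminus_padic_int :: "'a padic_int \<Rightarrow> 'a padic_int"
  is "\<lambda>f n. (- f n) mod (int CARD('a) ^ n)"
  by (rule padic_seqs_op[OF card_pos, where h="\<lambda>a b. - a"]) (auto simp: mod_minus_eq)
definition minus_padic_int :: "'a padic_int \<Rightarrow> 'a padic_int \<Rightarrow> 'a padic_int"
  where "minus_padic_int x y = x + - y"

instance
proof
  fix a b c :: "'a padic_int"
  show "a * b * c = a * (b * c)"
    by transfer (auto simp: mod_mult_left_eq mod_mult_right_eq mult.assoc)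
  show "a * b = b * a" by transfer (simp add: mult.commute)
  show "1 * a = a"
    by transfer (auto simp: mod_mult_left_eq padic_seqs_def)
  show "a + b + c = a + (b + c)"
    by transfer (auto simp: mod_add_left_eq mod_add_right_eq add.assoc)
  show "a + b = b + a" by transfer (simp add: add.commute)
  show "0 + a = a" by transfer (auto simp: padic_seqs_def)
  show "- a + a = 0" by transfer (auto simp: mod_add_left_eq)
  show "a - b = a + - b" by (simp add: minus_padic_int_def)
  show "(a + b) * c = a * c + b * c"
    by transfer (auto simp: mod_mult_left_eq mod_add_eq distrib_right)
  show "(0::'a padic_int) \<noteq> 1"
  proof transfer
    have "int CARD('a) > 1" by (rule prime_card_gt1)
    hence "(1::int) mod int CARD('a) ^ 1 = 1" by simp
    thus "(\<lambda>_. 0::int) \<noteq> (\<lambda>n. 1 mod int CARD('a) ^ n)" by (metis zero_neq_one)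
  qed
qed
end

lemma padic_seqs_mod_le:
  assumes f: "f \<in> padic_seqs p" and p: "p > 0" and mn: "n \<le> m"
  shows "f m mod p ^ n = f n"
  using mn
proof (induction m rule: dec_induct)
  case base
  then show ?case using f by (auto simp: padic_seqs_def)
next
  case (step m)
  have d: "p ^ n dvd p ^ m" using step.hyps by (simp add: le_imp_power_dvd)
  have "f (Suc m) mod p ^ n = f (Suc m) mod p ^ m mod p ^ n" using d by (simp add: mod_mod_cancel)
  also have "\<dots> = f m mod p ^ n" using f by (simp add: padic_seqs_def)
  finally show ?case using step.IH by simp
qed

lemma padic_seqs_val:
  assumes f: "f \<in> padic_seqs p" and p: "p > 0" and nz: "f \<noteq> (\<lambda>_. 0)"
  shows "\<exists>a u. \<forall>m\<ge>Suc a. f m = p ^ a * u m \<and> \<not> p dvd u m"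
proof -
  have f0: "f 0 = 0"
  proof -
    have "0 \<le> f 0 \<and> f 0 < p ^ 0" using f unfolding padic_seqs_def by blast
    thus ?thesis by simp
  qed
  have ex: "\<exists>k. f (Suc k) \<noteq> 0"
  proof (rule ccontr)
    assume "\<not> ?thesis"
    hence "\<forall>k. f k = 0" using f0 by (metis not0_implies_Suc)
    thus False using nz by auto
  qed
  define a where "a = (LEAST k. f (Suc k) \<noteq> 0)"
  have fa1: "f (Suc a) \<noteq> 0" unfolding a_def by (rule LeastI_ex[OF ex])
  have fa: "f a = 0"
  proof (cases a)
    case 0 then show ?thesis using f0 by simp
  next
    case (Suc k)
    have "k < a" using Suc by simp
    hence "\<not> f (Suc k) \<noteq> 0" unfolding a_def by (rule not_less_Least)
    then show ?thesis using Suc by simp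
  qed
  define u where "u m = f m div p ^ a" for m
  have "\<forall>m\<ge>Suc a. f m = p ^ a * u m \<and> \<not> p dvd u m"
  proof (intro allI impI conjI)
    fix m assume m: "Suc a \<le> m"
    have "f m mod p ^ a = 0" using padic_seqs_mod_le[OF f p, of a m] m fa by simp
    thus e: "f m = p ^ a * u m" unfolding u_def by (metis dvd_mult_div_cancel mod_0_imp_dvd)
    have "f m mod p ^ Suc a = f (Suc a)" using padic_seqs_mod_le[OF f p m] .
    hence "\<not> p ^ Suc a dvd f m" using fa1 by (metis dvd_imp_mod_0)
    hence "\<not> p ^ a * p dvd p ^ a * u m" using e by (simp add: mult.commute)
    thus "\<not> p dvd u m" using p by simp
  qed
  thus ?thesis by blast
qed

instance padic_int :: (prime_card) idom
proof
  fix a b :: "'a padic_int"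
  assume "a \<noteq> 0" "b \<noteq> 0"
  thus "a * b \<noteq> 0"
  proof transfer
    fix f g :: "nat \<Rightarrow> int"
    define p where "p = int CARD('a)"
    have p: "p > 0" unfolding p_def by (rule card_pos)
    have pr: "prime p" unfolding p_def using prime_card[where 'a='a] by simp
    assume f: "f \<in> padic_seqs (int CARD('a))" and g: "g \<in> padic_seqs (int CARD('a))"
      and fn: "f \<noteq> (\<lambda>_. 0)" and gn: "g \<noteq> (\<lambda>_. 0)"
    obtain a u where au: "\<forall>m\<ge>Suc a. f m = p ^ a * u m \<and> \<not> p dvd u m"
      using padic_seqs_val[OF f[folded p_def] p fn] by blast
    obtain b v where bv: "\<forall>m\<ge>Suc b. g m = p ^ b * v m \<and> \<not> p dvd v m"
      using padic_seqs_val[OF g[folded p_def] p gn] by blast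
    define N where "N = a + b + 1"
    have e: "f N * g N = p ^ (a + b) * (u N * v N)"
      using au bv unfolding N_def by (auto simp: power_add)
    have nd: "\<not> p dvd u N * v N" using au bv pr unfolding N_def
      by (simp add: prime_dvd_mult_iff)
    have "\<not> p ^ (a + b) * p dvd p ^ (a + b) * (u N * v N)" using nd p by simp
    hence "\<not> p ^ N dvd f N * g N" using e unfolding N_def by (simp add: mult.commute)
    hence "(f N * g N) mod p ^ N \<noteq> 0" by (simp add: dvd_eq_mod_eq_0)
    thus "(\<lambda>n. f n * g n mod int CARD('a) ^ n) \<noteq> (\<lambda>_. 0)"
      unfolding p_def by (metis)
  qed
qed

text \<open>\<open>'p padic_int\<close> is the ring Z_p of p-adic integers (p = CARD('p), a prime),
  realised as the inverse limit of the rings Z/p^n Z: a p-adic integer is the compatible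
  sequence of its residues modulo p^n.\<close>

type_synonym 'p padic = "'p padic_int fract"

definition padic_integer :: "'p::prime_card padic_int \<Rightarrow> 'p padic" where
  "padic_integer z = Fract z 1"

text \<open>The closed ball a + p^n Z_p; these balls (n a natural number, a in Q_p)
  form a neighbourhood basis of the p-adic topology on Q_p.\<close>
definition padic_ball :: "'p::prime_card padic \<Rightarrow> nat \<Rightarrow> 'p padic set" where
  "padic_ball a n = {x. \<exists>z. x - a = of_nat (CARD('p)) ^ n * padic_integer z}"

definition padic_dense :: "'p::prime_card padic set \<Rightarrow> bool" where
  "padic_dense S \<longleftrightarrow> (\<forall>a n. S \<inter> padic_ball a n \<noteq> {})"

text \<open>A polynomial is a finitely supported map from monomials (finitely supported
  exponent vectors \<open>nat \<Rightarrow>\<^sub>0 nat\<close>) to coefficients; ring structure from Poly_Mapping.\<close>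

type_synonym 'a mpoly = "(nat \<Rightarrow>\<^sub>0 nat) \<Rightarrow>\<^sub>0 'a"

definition in_vars :: "nat \<Rightarrow> 'a::zero mpoly \<Rightarrow> bool" where
  "in_vars r P \<longleftrightarrow> (\<forall>m \<in> Poly_Mapping.keys P. Poly_Mapping.keys m \<subseteq> {0..r})"

definition homogeneous :: "nat \<Rightarrow> 'a::zero mpoly \<Rightarrow> bool" where
  "homogeneous d P \<longleftrightarrow> (\<forall>m \<in> Poly_Mapping.keys P. (\<Sum>i\<in>Poly_Mapping.keys m. Poly_Mapping.lookup m i) = d)"

definition integral_form :: "nat \<Rightarrow> int mpoly \<Rightarrow> bool" where
  "integral_form r F \<longleftrightarrow> in_vars r F \<and> (\<exists>d. homogeneous d F)"

definition linear_form :: "nat \<Rightarrow> 'a::zero mpoly \<Rightarrow> bool" where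
  "linear_form r L \<longleftrightarrow> in_vars r L \<and> homogeneous 1 L"

definition dvd_in :: "nat \<Rightarrow> 'a::comm_semiring_1 mpoly \<Rightarrow> 'a mpoly \<Rightarrow> bool" where
  "dvd_in r A B \<longleftrightarrow> in_vars r A \<and> in_vars r B \<and> (\<exists>C. in_vars r C \<and> B = A * C)"

definition mpoly_eval :: "'a::comm_semiring_1 mpoly \<Rightarrow> (nat \<Rightarrow> 'a) \<Rightarrow> 'a" where
  "mpoly_eval P x = (\<Sum>m\<in>Poly_Mapping.keys P. Poly_Mapping.lookup P m * (\<Prod>i\<in>Poly_Mapping.keys m. x i ^ Poly_Mapping.lookup m i))"

definition ratio_set :: "nat \<Rightarrow> int mpoly \<Rightarrow> 'p::prime_card padic set" where
  "ratio_set r F = {of_int (mpoly_eval F x) / of_int (mpoly_eval F y) | x y.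
      (\<forall>i>r. x i = 0) \<and> (\<forall>i>r. y i = 0) \<and> mpoly_eval F y \<noteq> 0}"

end

theory Submission
  imports Defs "HOL-Computational_Algebra.Polynomial" "HOL-Number_Theory.Cong"
begin

text \<open>Over \<open>Q\<^sub>p\<close> write \<open>F = L G\<close> and pick a variable \<open>x\<^sub>j\<close> occurring in \<open>L\<close> with
  coefficient \<open>c\<close>. If \<open>G\<close> vanished at the projections \<open>x - (L(x)/c) e\<^sub>j\<close> of all integer
  points \<open>x\<close> onto the hyperplane \<open>L = 0\<close>, then \<open>G\<close> composed with \<open>x\<^sub>j \<mapsto> x\<^sub>j - L/c\<close> would be
  zero, hence \<open>L\<close> would divide \<open>G\<close> and \<open>L\<^sup>2\<close> would divide \<open>F\<close>. So for some integer point
  \<open>x\<close> the restriction of \<open>F\<close> to the line \<open>x + t e\<^sub>j\<close> is \<open>c (t - t\<^sub>0) g(t)\<close> with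
  \<open>g(t\<^sub>0) \<noteq> 0\<close>. Near \<open>t\<^sub>0\<close> the factor \<open>g\<close> is almost constant, so for
  \<open>t\<^sub>1 \<approx> t\<^sub>0 + p\<^sup>N \<beta>\<close> and \<open>t\<^sub>2 \<approx> t\<^sub>0 + p\<^sup>N\<close> the quotient of the values at
  \<open>t\<^sub>1\<close> and \<open>t\<^sub>2\<close> is close to \<open>\<beta>\<close>. Choosing \<open>t\<^sub>1, t\<^sub>2\<close> with a common denominator \<open>p\<^sup>K\<close>
  and clearing it by homogeneity turns this quotient into an element of \<open>R(F)\<close>.\<close>

section \<open>Evaluation and substitution of polynomials\<close>

definition monomial_eval :: "(nat \<Rightarrow> 'b::comm_semiring_1) \<Rightarrow> (nat \<Rightarrow>\<^sub>0 nat) \<Rightarrow> 'b" where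
  "monomial_eval \<sigma> m = (\<Prod>i\<in>Poly_Mapping.keys m. \<sigma> i ^ Poly_Mapping.lookup m i)"

text \<open>Covers evaluation (\<open>\<phi> = id\<close>, cf. \<^const>\<open>mpoly_eval\<close>), substitution of polynomials
  for the variables (\<open>\<phi> = mpoly_const\<close>) and restriction to a line (\<open>\<phi> = (\<lambda>c. [:c:])\<close>).\<close>

definition hom_eval :: "('a::zero \<Rightarrow> 'b::comm_semiring_1) \<Rightarrow> (nat \<Rightarrow> 'b) \<Rightarrow> 'a mpoly \<Rightarrow> 'b" where
  "hom_eval \<phi> \<sigma> P = (\<Sum>m\<in>Poly_Mapping.keys P. \<phi> (Poly_Mapping.lookup P m) * monomial_eval \<sigma> m)"

definition is_ring_hom :: "('a::comm_semiring_1 \<Rightarrow> 'b::comm_semiring_1) \<Rightarrow> bool" where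
  "is_ring_hom \<phi> \<longleftrightarrow> \<phi> 0 = 0 \<and> \<phi> 1 = 1 \<and> (\<forall>a b. \<phi> (a + b) = \<phi> a + \<phi> b) \<and> (\<forall>a b. \<phi> (a * b) = \<phi> a * \<phi> b)"

definition mpoly_var :: "nat \<Rightarrow> 'a::comm_semiring_1 mpoly" where
  "mpoly_var i = Poly_Mapping.single (Poly_Mapping.single i 1) 1"

definition mpoly_const :: "'a::comm_semiring_1 \<Rightarrow> 'a mpoly" where
  "mpoly_const c = Poly_Mapping.single 0 c"

lemma is_ring_hom_id: "is_ring_hom id"
  by (simp add: is_ring_hom_def)

lemma is_ring_hom_mpoly_const: "is_ring_hom mpoly_const"
  by (simp add: is_ring_hom_def mpoly_const_def single_add mult_single)

lemma mpoly_eval_eq_hom_eval: "mpoly_eval P x = hom_eval id x P"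
  by (simp add: mpoly_eval_def hom_eval_def monomial_eval_def)

lemma poly_mapping_sum_single:
  "(P :: 'a \<Rightarrow>\<^sub>0 'b::comm_monoid_add) = (\<Sum>m\<in>Poly_Mapping.keys P. Poly_Mapping.single m (Poly_Mapping.lookup P m))"
  by (rule poly_mapping_eqI) (auto simp: lookup_sum lookup_single when_def in_keys_iff sum.delta)

lemma monomial_eval_superset:
  "finite S \<Longrightarrow> Poly_Mapping.keys m \<subseteq> S \<Longrightarrow> monomial_eval \<sigma> m = (\<Prod>i\<in>S. \<sigma> i ^ Poly_Mapping.lookup m i)"
  unfolding monomial_eval_def by (rule prod.mono_neutral_left) (auto simp: in_keys_iff)

lemma monomial_eval_add: "monomial_eval \<sigma> (m + n) = monomial_eval \<sigma> m * monomial_eval \<sigma> n"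
proof -
  let ?S = "Poly_Mapping.keys m \<union> Poly_Mapping.keys n"
  have "monomial_eval \<sigma> (m + n) = (\<Prod>i\<in>?S. \<sigma> i ^ Poly_Mapping.lookup m i * \<sigma> i ^ Poly_Mapping.lookup n i)"
    using keys_add[of m n] by (subst monomial_eval_superset[of ?S]) (auto simp: lookup_add power_add)
  also have "\<dots> = monomial_eval \<sigma> m * monomial_eval \<sigma> n"
    by (simp add: prod.distrib monomial_eval_superset[of ?S])
  finally show ?thesis .
qed

lemma monomial_eval_zero [simp]: "monomial_eval \<sigma> 0 = 1"
  by (simp add: monomial_eval_def)

lemma monomial_eval_single [simp]: "monomial_eval \<sigma> (Poly_Mapping.single i k) = \<sigma> i ^ k"
  by (simp add: monomial_eval_def)

lemma monomial_eval_cong: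
  "(\<And>i. i \<in> Poly_Mapping.keys m \<Longrightarrow> \<sigma> i = \<tau> i) \<Longrightarrow> monomial_eval \<sigma> m = monomial_eval \<tau> m"
  unfolding monomial_eval_def by (rule prod.cong) auto

lemma hom_eval_superset:
  assumes "\<phi> 0 = 0" "finite S" "Poly_Mapping.keys P \<subseteq> S"
  shows "hom_eval \<phi> \<sigma> P = (\<Sum>m\<in>S. \<phi> (Poly_Mapping.lookup P m) * monomial_eval \<sigma> m)"
  unfolding hom_eval_def using assms by (intro sum.mono_neutral_left) (auto simp: in_keys_iff)

lemma hom_eval_zero [simp]: "hom_eval \<phi> \<sigma> 0 = 0"
  by (simp add: hom_eval_def)

lemma hom_eval_single:
  "\<phi> 0 = 0 \<Longrightarrow> hom_eval \<phi> \<sigma> (Poly_Mapping.single m a) = \<phi> a * monomial_eval \<sigma> m"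
  by (auto simp: hom_eval_def)

lemma hom_eval_cong:
  assumes "\<And>m i. m \<in> Poly_Mapping.keys P \<Longrightarrow> i \<in> Poly_Mapping.keys m \<Longrightarrow> \<sigma> i = \<tau> i"
  shows "hom_eval \<phi> \<sigma> P = hom_eval \<phi> \<tau> P"
  unfolding hom_eval_def using assms by (intro sum.cong refl arg_cong2[where f="(*)"] monomial_eval_cong) auto

context
  fixes \<phi> :: "'a::comm_semiring_1 \<Rightarrow> 'b::comm_semiring_1"
  assumes hom: "is_ring_hom \<phi>"
begin

lemma hom_eval_add: "hom_eval \<phi> \<sigma> (P + Q) = hom_eval \<phi> \<sigma> P + hom_eval \<phi> \<sigma> Q"
proof -
  let ?S = "Poly_Mapping.keys P \<union> Poly_Mapping.keys Q"
  have "\<phi> 0 = 0" "\<And>a b. \<phi> (a + b) = \<phi> a + \<phi> b"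
    using hom by (auto simp: is_ring_hom_def)
  then show ?thesis
    using keys_add[of P Q]
    by (simp add: hom_eval_superset[of \<phi> ?S] lookup_add distrib_right sum.distrib)
qed

lemma hom_eval_sum: "hom_eval \<phi> \<sigma> (\<Sum>k\<in>A. f k) = (\<Sum>k\<in>A. hom_eval \<phi> \<sigma> (f k))"
  by (induction A rule: infinite_finite_induct) (auto simp: hom_eval_add)

lemma hom_eval_mult: "hom_eval \<phi> \<sigma> (P * Q) = hom_eval \<phi> \<sigma> P * hom_eval \<phi> \<sigma> Q"
proof -
  have h: "\<phi> 0 = 0" "\<And>a b. \<phi> (a * b) = \<phi> a * \<phi> b"
    using hom by (auto simp: is_ring_hom_def)
  have "P * Q = (\<Sum>m\<in>Poly_Mapping.keys P. \<Sum>n\<in>Poly_Mapping.keys Q.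
      Poly_Mapping.single (m + n) (Poly_Mapping.lookup P m * Poly_Mapping.lookup Q n))"
    by (subst (1 2) poly_mapping_sum_single) (simp add: sum_product mult_single)
  then have "hom_eval \<phi> \<sigma> (P * Q) = (\<Sum>m\<in>Poly_Mapping.keys P. \<Sum>n\<in>Poly_Mapping.keys Q.
      \<phi> (Poly_Mapping.lookup P m) * monomial_eval \<sigma> m * (\<phi> (Poly_Mapping.lookup Q n) * monomial_eval \<sigma> n))"
    by (simp add: hom_eval_sum hom_eval_single h monomial_eval_add mult_ac)
  then show ?thesis
    by (simp add: hom_eval_def sum_product)
qed

lemma hom_eval_one: "hom_eval \<phi> \<sigma> 1 = 1"
  using hom by (simp add: hom_eval_single is_ring_hom_def flip: single_one)

lemma hom_eval_power: "hom_eval \<phi> \<sigma> (P ^ n) = hom_eval \<phi> \<sigma> P ^ n"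
  by (induction n) (auto simp: hom_eval_mult hom_eval_one)

lemma hom_eval_prod: "hom_eval \<phi> \<sigma> (\<Prod>k\<in>A. f k) = (\<Prod>k\<in>A. hom_eval \<phi> \<sigma> (f k))"
  by (induction A rule: infinite_finite_induct) (auto simp: hom_eval_mult hom_eval_one)

lemma hom_eval_var: "hom_eval \<phi> \<sigma> (mpoly_var i) = \<sigma> i"
  using hom by (simp add: mpoly_var_def hom_eval_single is_ring_hom_def monomial_eval_def)

lemma hom_eval_const: "hom_eval \<phi> \<sigma> (mpoly_const c) = \<phi> c"
  using hom by (simp add: mpoly_const_def hom_eval_single is_ring_hom_def)

end

lemma hom_eval_diff:
  fixes \<phi> :: "'a::comm_ring_1 \<Rightarrow> 'b::comm_ring_1"
  assumes "is_ring_hom \<phi>"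
  shows "hom_eval \<phi> \<sigma> (P - Q) = hom_eval \<phi> \<sigma> P - hom_eval \<phi> \<sigma> Q"
  using hom_eval_add[OF assms, of \<sigma> "P - Q" Q] by (simp add: eq_diff_eq)

lemma hom_eval_hom_eval:
  fixes P :: "'a::comm_ring_1 mpoly"
  shows "hom_eval id x (hom_eval mpoly_const \<sigma> P) = hom_eval id (\<lambda>i. hom_eval id x (\<sigma> i)) P"
  unfolding hom_eval_def[of mpoly_const] monomial_eval_def
  by (simp add: hom_eval_sum hom_eval_mult hom_eval_prod hom_eval_power hom_eval_const
      is_ring_hom_id is_ring_hom_mpoly_const) (simp add: hom_eval_def monomial_eval_def)

lemma mpoly_var_power: "mpoly_var i ^ n = Poly_Mapping.single (Poly_Mapping.single i n) 1"
  by (induction n) (auto simp: mpoly_var_def mult_single single_add[symmetric] add.commute)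

lemma prod_single_one:
  "(\<Prod>i\<in>A. Poly_Mapping.single (f i) (1::'a::comm_semiring_1)) = Poly_Mapping.single (\<Sum>i\<in>A. f i) 1"
  by (induction A rule: infinite_finite_induct) (auto simp: mult_single)

lemma monomial_eval_mpoly_var: "monomial_eval mpoly_var m = Poly_Mapping.single m 1"
  by (simp add: monomial_eval_def mpoly_var_power prod_single_one flip: poly_mapping_sum_single)

lemma hom_eval_mpoly_var: "hom_eval mpoly_const mpoly_var P = P"
  by (simp add: hom_eval_def monomial_eval_mpoly_var mpoly_const_def mult_single
      flip: poly_mapping_sum_single)

lemma in_vars_zero [simp]: "in_vars r 0"
  by (simp add: in_vars_def)

lemma in_vars_one [simp]: "in_vars r (1 :: 'a::comm_semiring_1 mpoly)"
  by (simp add: in_vars_def)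

lemma in_vars_add: "in_vars r P \<Longrightarrow> in_vars r Q \<Longrightarrow> in_vars r (P + Q)"
  unfolding in_vars_def using keys_add[of P Q] by blast

lemma in_vars_diff: "in_vars r P \<Longrightarrow> in_vars r Q \<Longrightarrow> in_vars r (P - Q :: 'a::comm_ring_1 mpoly)"
  unfolding in_vars_def using keys_diff[of P Q] by blast

lemma in_vars_mult:
  assumes P: "in_vars r P" and Q: "in_vars r Q"
  shows "in_vars r (P * Q :: 'a::comm_semiring_1 mpoly)"
proof -
  have "Poly_Mapping.keys (a + b) \<subseteq> {0..r}"
    if "a \<in> Poly_Mapping.keys P" "b \<in> Poly_Mapping.keys Q" for a b :: "nat \<Rightarrow>\<^sub>0 nat"
    using keys_add[of a b] that P Q unfolding in_vars_def by blast
  then show ?thesis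
    using keys_mult[of P Q] unfolding in_vars_def by blast
qed

lemma in_vars_power: "in_vars r P \<Longrightarrow> in_vars r (P ^ n :: 'a::comm_semiring_1 mpoly)"
  by (induction n) (auto intro: in_vars_mult)

lemma in_vars_mpoly_var: "i \<le> r \<Longrightarrow> in_vars r (mpoly_var i)"
  by (simp add: in_vars_def mpoly_var_def)

lemma in_vars_mpoly_const: "in_vars r (mpoly_const c)"
  by (simp add: in_vars_def mpoly_const_def)

lemma in_vars_sum: "(\<And>k. k \<in> A \<Longrightarrow> in_vars r (f k)) \<Longrightarrow> in_vars r (\<Sum>k\<in>A. f k)"
  by (induction A rule: infinite_finite_induct) (auto intro: in_vars_add)

lemma in_vars_prod:
  "(\<And>k. k \<in> A \<Longrightarrow> in_vars r (f k)) \<Longrightarrow> in_vars r (\<Prod>k\<in>A. f k :: 'a::comm_semiring_1 mpoly)"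
  by (induction A rule: infinite_finite_induct) (auto intro: in_vars_mult)

lemma in_vars_hom_eval:
  assumes "\<And>i. in_vars r (\<sigma> i)"
  shows "in_vars r (hom_eval mpoly_const \<sigma> (P :: 'a::comm_semiring_1 mpoly))"
  unfolding hom_eval_def monomial_eval_def
  by (intro in_vars_sum in_vars_mult in_vars_mpoly_const in_vars_prod in_vars_power assms)

lemma hom_eval_eq_self_if_in_vars:
  assumes "in_vars r P" "\<And>i. i \<le> r \<Longrightarrow> \<sigma> i = mpoly_var i"
  shows "hom_eval mpoly_const \<sigma> P = (P :: 'a::comm_semiring_1 mpoly)"
proof -
  have "hom_eval mpoly_const \<sigma> P = hom_eval mpoly_const mpoly_var P"
  proof (rule hom_eval_cong)
    fix m i
    assume "m \<in> Poly_Mapping.keys P" "i \<in> Poly_Mapping.keys m"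
    then have "i \<le> r" using assms(1) by (fastforce simp: in_vars_def)
    then show "\<sigma> i = mpoly_var i" by (rule assms(2))
  qed
  then show ?thesis by (simp add: hom_eval_mpoly_var)
qed

lemma dvd_power_diff:
  fixes a b :: "'a::comm_ring_1"
  shows "l dvd a - b \<Longrightarrow> l dvd a ^ n - b ^ n"
proof (induction n)
  case (Suc n)
  have "a ^ Suc n - b ^ Suc n = a * (a ^ n - b ^ n) + (a - b) * b ^ n"
    by (simp add: algebra_simps)
  then show ?case using Suc by simp
qed simp

lemma dvd_prod_diff:
  fixes f g :: "'i \<Rightarrow> 'a::comm_ring_1"
  shows "(\<And>i. i \<in> A \<Longrightarrow> l dvd f i - g i) \<Longrightarrow> l dvd (\<Prod>i\<in>A. f i) - (\<Prod>i\<in>A. g i)"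
proof (induction A rule: infinite_finite_induct)
  case (insert a A)
  have "(\<Prod>i\<in>insert a A. f i) - (\<Prod>i\<in>insert a A. g i)
      = f a * ((\<Prod>i\<in>A. f i) - (\<Prod>i\<in>A. g i)) + (f a - g a) * (\<Prod>i\<in>A. g i)"
    using insert.hyps by (simp add: algebra_simps)
  then show ?case using insert by simp
qed auto

lemma dvd_hom_eval_diff:
  fixes \<phi> :: "'a::comm_ring_1 \<Rightarrow> 'b::comm_ring_1"
  assumes "\<And>i. l dvd \<sigma> i - \<tau> i"
  shows "l dvd hom_eval \<phi> \<sigma> P - hom_eval \<phi> \<tau> P"
proof -
  have "hom_eval \<phi> \<sigma> P - hom_eval \<phi> \<tau> P = (\<Sum>m\<in>Poly_Mapping.keys P.
      \<phi> (Poly_Mapping.lookup P m) * (monomial_eval \<sigma> m - monomial_eval \<tau> m))"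
    by (simp add: hom_eval_def sum_subtractf algebra_simps)
  also have "l dvd \<dots>"
    unfolding monomial_eval_def
    by (intro dvd_sum dvd_mult dvd_prod_diff dvd_power_diff assms)
  finally show ?thesis .
qed

section \<open>Polynomials vanishing at all integer points\<close>

lemma sum_digits_less:
  fixes D :: nat
  assumes "\<forall>i<n. f i < D"
  shows "(\<Sum>i<n. f i * D ^ i) < D ^ n"
  using assms
proof (induction n)
  case (Suc n)
  have "(\<Sum>i<Suc n. f i * D ^ i) < Suc (f n) * D ^ n"
    using Suc by simp
  also have "\<dots> \<le> D * D ^ n"
    using Suc.prems by (intro mult_right_mono) auto
  finally show ?case by simp
qed simp

lemma sum_digits_inj:
  fixes D :: nat
  assumes "\<forall>i<n. f i < D" "\<forall>i<n. g i < D" "(\<Sum>i<n. f i * D ^ i) = (\<Sum>i<n. g i * D ^ i)"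
  shows "\<forall>i<n. f i = g i"
  using assms
proof (induction n)
  case (Suc n)
  define A where "A = (\<Sum>i<n. f i * D ^ i)"
  define B where "B = (\<Sum>i<n. g i * D ^ i)"
  have A: "A < D ^ n" and B: "B < D ^ n"
    unfolding A_def B_def using Suc.prems by (auto intro!: sum_digits_less)
  have eq: "A + f n * D ^ n = B + g n * D ^ n"
    using Suc.prems(3) by (simp add: A_def B_def)
  then have "(A + f n * D ^ n) mod D ^ n = (B + g n * D ^ n) mod D ^ n"
    by simp
  then have "A = B"
    using A B by simp
  moreover have "D ^ n \<noteq> 0"
    using A by linarith
  ultimately have "f n = g n"
    using eq by (simp only: add_left_cancel mult_right_cancel not_False_eq_True)
  moreover have "\<forall>i<n. f i = g i"
    using Suc.IH Suc.prems(1,2) \<open>A = B\<close> unfolding A_def B_def by simp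
  ultimately show ?case
    using less_Suc_eq by auto
qed simp

lemma kronecker_exponent_inj:
  fixes M :: "(nat \<Rightarrow>\<^sub>0 nat) set"
  assumes "\<And>m i. m \<in> M \<Longrightarrow> Poly_Mapping.lookup m i < D"
    and "\<And>m. m \<in> M \<Longrightarrow> Poly_Mapping.keys m \<subseteq> {..<n}"
  shows "inj_on (\<lambda>m. \<Sum>i<n. Poly_Mapping.lookup m i * D ^ i) M"
proof (rule inj_onI)
  fix m m'
  assume m: "m \<in> M" and m': "m' \<in> M"
    and eq: "(\<Sum>i<n. Poly_Mapping.lookup m i * D ^ i) = (\<Sum>i<n. Poly_Mapping.lookup m' i * D ^ i)"
  have "\<forall>i<n. Poly_Mapping.lookup m i = Poly_Mapping.lookup m' i"
    using assms(1) m m' eq by (intro sum_digits_inj) auto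
  moreover have "Poly_Mapping.lookup m i = 0" "Poly_Mapping.lookup m' i = 0" if "\<not> i < n" for i
    using assms(2)[OF m] assms(2)[OF m'] that by (auto simp: in_keys_iff)
  ultimately show "m = m'"
    by (intro poly_mapping_eqI) (metis not_less)
qed

lemma prod_monom_one: "(\<Prod>i\<in>A. monom (1::'a::comm_semiring_1) (f i)) = monom 1 (\<Sum>i\<in>A. f i)"
  by (induction A rule: infinite_finite_induct) (auto simp: mult_monom monom_0 one_pCons)

lemma monomial_eval_kronecker:
  assumes "Poly_Mapping.keys m \<subseteq> {..<n}"
  shows "monomial_eval (\<lambda>i. monom 1 (D ^ i)) m
    = monom (1::'a::comm_semiring_1) (\<Sum>i<n. Poly_Mapping.lookup m i * D ^ i)"
  using assms
  by (simp add: monomial_eval_superset[of "{..<n}"] monom_power mult.commute prod_monom_one)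

lemma kronecker_substitution_nonzero:
  fixes P :: "'a::comm_semiring_1 mpoly"
  assumes "P \<noteq> 0" "in_vars r P"
  shows "\<exists>D. hom_eval (\<lambda>c. [:c:]) (\<lambda>i. monom 1 (D ^ i)) P \<noteq> 0"
proof -
  define D where "D = Suc (\<Sum>m\<in>Poly_Mapping.keys P. \<Sum>i\<in>Poly_Mapping.keys m. Poly_Mapping.lookup m i)"
  define e where "e m = (\<Sum>i<Suc r. Poly_Mapping.lookup m i * D ^ i)" for m
  have keys: "Poly_Mapping.keys m \<subseteq> {..<Suc r}" if "m \<in> Poly_Mapping.keys P" for m
    using assms(2) that by (fastforce simp: in_vars_def)
  have "Poly_Mapping.lookup m i < D" if m: "m \<in> Poly_Mapping.keys P" for m i
  proof (cases "i \<in> Poly_Mapping.keys m")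
    case True
    have "Poly_Mapping.lookup m i \<le> (\<Sum>i\<in>Poly_Mapping.keys m. Poly_Mapping.lookup m i)"
      using True by (intro member_le_sum) auto
    also have "\<dots> \<le> (\<Sum>m\<in>Poly_Mapping.keys P. \<Sum>i\<in>Poly_Mapping.keys m. Poly_Mapping.lookup m i)"
      using m by (intro member_le_sum) auto
    finally show ?thesis unfolding D_def by simp
  qed (simp add: D_def in_keys_iff)
  then have inj: "inj_on e (Poly_Mapping.keys P)"
    unfolding e_def using keys by (rule kronecker_exponent_inj)
  have mono: "monomial_eval (\<lambda>i. monom 1 (D ^ i)) m = monom 1 (e m)" if "m \<in> Poly_Mapping.keys P" for m
    unfolding e_def using keys[OF that] by (rule monomial_eval_kronecker)
  obtain m0 where m0: "m0 \<in> Poly_Mapping.keys P"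
    using assms(1) keys_eq_empty by blast
  have "hom_eval (\<lambda>c. [:c:]) (\<lambda>i. monom 1 (D ^ i)) P = (\<Sum>m\<in>Poly_Mapping.keys P. monom (Poly_Mapping.lookup P m) (e m))"
    unfolding hom_eval_def by (intro sum.cong refl) (simp add: mono mult_monom flip: monom_0)
  moreover have "coeff (\<Sum>m\<in>Poly_Mapping.keys P. monom (Poly_Mapping.lookup P m) (e m)) (e m0) = Poly_Mapping.lookup P m0"
    using m0 inj by (simp add: coeff_sum coeff_monom inj_on_eq_iff if_distrib cong: if_cong)
  ultimately have "coeff (hom_eval (\<lambda>c. [:c:]) (\<lambda>i. monom 1 (D ^ i)) P) (e m0) \<noteq> 0"
    using m0 by (simp add: in_keys_iff)
  then have "hom_eval (\<lambda>c. [:c:]) (\<lambda>i. monom 1 (D ^ i)) P \<noteq> 0"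
    by auto
  then show ?thesis ..
qed

lemma poly_hom_eval_const_poly:
  "poly (hom_eval (\<lambda>c. [:c:]) \<sigma> P) t = mpoly_eval P (\<lambda>i. poly (\<sigma> i) t)"
  by (simp add: hom_eval_def monomial_eval_def mpoly_eval_def poly_sum poly_prod)

lemma mpoly_eq_0_if_vanishes_on_int_points:
  fixes P :: "'a::{idom, ring_char_0} mpoly"
  assumes "in_vars r P"
    and vanishes: "\<And>x. (\<forall>i. x i \<in> \<int>) \<Longrightarrow> (\<forall>i>r. x i = 0) \<Longrightarrow> mpoly_eval P x = 0"
  shows "P = 0"
proof (rule ccontr)
  assume "P \<noteq> 0"
  then obtain D where U: "hom_eval (\<lambda>c. [:c:]) (\<lambda>i. monom 1 (D ^ i)) P \<noteq> 0" (is "?U \<noteq> 0")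
    using assms(1) kronecker_substitution_nonzero by blast
  have "infinite (\<int> :: 'a set)"
    unfolding Ints_def by (simp add: finite_image_iff inj_on_def)
  then have "\<not> \<int> \<subseteq> {t. poly ?U t = 0}"
    using poly_roots_finite[OF U] finite_subset by blast
  then obtain t where t: "t \<in> \<int>" "poly ?U t \<noteq> 0"
    by blast
  define x where "x i = (if i \<le> r then t ^ (D ^ i) else 0)" for i
  have "poly ?U t = mpoly_eval P (\<lambda>i. t ^ (D ^ i))"
    by (simp add: poly_hom_eval_const_poly poly_monom)
  also have "\<dots> = mpoly_eval P x"
    unfolding mpoly_eval_eq_hom_eval using assms(1)
    by (intro hom_eval_cong) (fastforce simp: x_def in_vars_def)
  also have "\<dots> = 0"
    using t(1) by (intro vanishes) (auto simp: x_def)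
  finally show False using t(2) by simp
qed

section \<open>Linear factors\<close>

lemma linear_form_monomial:
  assumes "homogeneous 1 L" "m \<in> Poly_Mapping.keys L"
  shows "\<exists>i. m = Poly_Mapping.single i 1"
proof -
  have "(\<Sum>i\<in>Poly_Mapping.keys m. Poly_Mapping.lookup m i) = 1"
    using assms unfolding homogeneous_def by blast
  then obtain i where i: "i \<in> Poly_Mapping.keys m" "Poly_Mapping.lookup m i = 1"
    and others: "\<And>k. k \<in> Poly_Mapping.keys m \<Longrightarrow> k \<noteq> i \<Longrightarrow> Poly_Mapping.lookup m k = 0"
    by (auto simp: sum_eq_Suc0_iff)
  have "Poly_Mapping.lookup m k = Poly_Mapping.lookup (Poly_Mapping.single i 1) k" for k
    using i others[of k] by (cases "k = i") (auto simp: in_keys_iff lookup_single)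
  then show ?thesis
    by (blast intro: poly_mapping_eqI)
qed

lemma single_eq_single_iff_key:
  "v \<noteq> 0 \<Longrightarrow> Poly_Mapping.single i v = Poly_Mapping.single j v \<longleftrightarrow> i = j"
  by (metis lookup_single_eq lookup_single_not_eq)

lemma mpoly_eval_linear_update:
  fixes L :: "'a::comm_ring_1 mpoly"
  assumes "homogeneous 1 L"
  shows "mpoly_eval L (x(j := x j + t))
    = mpoly_eval L x + t * Poly_Mapping.lookup L (Poly_Mapping.single j 1)"
proof -
  have diff: "monomial_eval (x(j := x j + t)) m - monomial_eval x m
      = (if m = Poly_Mapping.single j 1 then t else 0)" if m: "m \<in> Poly_Mapping.keys L" for m
  proof -
    obtain i where m: "m = Poly_Mapping.single i 1"
      using linear_form_monomial[OF assms m] by blast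
    then show ?thesis
      by (cases "i = j") (auto simp: single_eq_single_iff_key)
  qed
  have "mpoly_eval L (x(j := x j + t)) - mpoly_eval L x = (\<Sum>m\<in>Poly_Mapping.keys L.
      Poly_Mapping.lookup L m * (monomial_eval (x(j := x j + t)) m - monomial_eval x m))"
    by (simp add: mpoly_eval_eq_hom_eval hom_eval_def sum_subtractf algebra_simps)
  also have "\<dots> = (\<Sum>m\<in>Poly_Mapping.keys L.
      if m = Poly_Mapping.single j 1 then Poly_Mapping.lookup L m * t else 0)"
    by (intro sum.cong refl) (simp add: diff)
  also have "\<dots> = t * Poly_Mapping.lookup L (Poly_Mapping.single j 1)"
    by (auto simp: in_keys_iff mult.commute)
  finally show ?thesis
    by (simp add: algebra_simps)
qed

lemma mpoly_eval_homogeneous_scale: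
  fixes P :: "'a::comm_semiring_1 mpoly"
  assumes "homogeneous d P"
  shows "mpoly_eval P (\<lambda>i. c * z i) = c ^ d * mpoly_eval P z"
proof -
  have "monomial_eval (\<lambda>i. c * z i) m = c ^ d * monomial_eval z m" if "m \<in> Poly_Mapping.keys P" for m
  proof -
    have "monomial_eval (\<lambda>i. c * z i) m
        = c ^ (\<Sum>i\<in>Poly_Mapping.keys m. Poly_Mapping.lookup m i) * monomial_eval z m"
      by (simp add: monomial_eval_def power_mult_distrib prod.distrib power_sum)
    with assms that show ?thesis
      unfolding homogeneous_def by simp
  qed
  then show ?thesis
    unfolding mpoly_eval_eq_hom_eval hom_eval_def
    by (simp add: sum_distrib_left mult_ac cong: sum.cong)
qed

lemma lookup_map_of_int:
  "Poly_Mapping.lookup (Poly_Mapping.map of_int F) m = (of_int (Poly_Mapping.lookup F m) :: 'a::ring_1)"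
  by (simp add: Poly_Mapping.map.rep_eq when_def)

lemma keys_map_of_int:
  "Poly_Mapping.keys (Poly_Mapping.map (of_int :: int \<Rightarrow> 'a::ring_1) F) \<subseteq> Poly_Mapping.keys F"
  by (auto simp: in_keys_iff lookup_map_of_int)

lemma mpoly_eval_map_of_int:
  "mpoly_eval (Poly_Mapping.map of_int F) (\<lambda>i. of_int (y i)) = (of_int (mpoly_eval F y) :: 'a::comm_ring_1)"
proof -
  have "hom_eval id (\<lambda>i. of_int (y i)) (Poly_Mapping.map of_int F) = (\<Sum>m\<in>Poly_Mapping.keys F.
      of_int (Poly_Mapping.lookup F m) * monomial_eval (\<lambda>i. of_int (y i) :: 'a) m)"
    using keys_map_of_int[of F]
    by (subst hom_eval_superset[where S="Poly_Mapping.keys F"]) (auto simp: lookup_map_of_int)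
  also have "\<dots> = of_int (mpoly_eval F y)"
    by (simp add: mpoly_eval_def monomial_eval_def)
  finally show ?thesis
    by (simp only: mpoly_eval_eq_hom_eval)
qed

lemma homogeneous_map_of_int:
  "homogeneous d F \<Longrightarrow> homogeneous d (Poly_Mapping.map (of_int :: int \<Rightarrow> 'a::ring_1) F)"
  unfolding homogeneous_def using keys_map_of_int[of F] by blast

lemma dvd_imp_factor_in_vars:
  fixes L G :: "'a::comm_ring_1 mpoly"
  assumes L: "in_vars r L" and G: "in_vars r G" and "L dvd G"
  obtains Q where "in_vars r Q" "G = L * Q"
proof -
  define \<rho> :: "nat \<Rightarrow> 'a mpoly" where "\<rho> i = (if i \<le> r then mpoly_var i else 0)" for i
  have \<rho>_id: "hom_eval mpoly_const \<rho> P = P" if "in_vars r P" for P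
    using that by (rule hom_eval_eq_self_if_in_vars) (simp add: \<rho>_def)
  obtain Q where "G = L * Q"
    using \<open>L dvd G\<close> by blast
  then have "hom_eval mpoly_const \<rho> G = hom_eval mpoly_const \<rho> L * hom_eval mpoly_const \<rho> Q"
    by (simp add: hom_eval_mult[OF is_ring_hom_mpoly_const])
  then have "G = L * hom_eval mpoly_const \<rho> Q"
    unfolding \<rho>_id[OF L] \<rho>_id[OF G] .
  moreover have "in_vars r (hom_eval mpoly_const \<rho> Q)"
    by (rule in_vars_hom_eval) (simp add: \<rho>_def in_vars_mpoly_var)
  ultimately show ?thesis
    using that by blast
qed

lemma nonvanishing_on_hyperplane_if_not_dvd:
  fixes L G :: "'a::{field, ring_char_0} mpoly"
  assumes L: "in_vars r L" and G: "in_vars r G" and "j \<le> r"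
    and not_dvd: "\<nexists>Q. in_vars r Q \<and> G = L * Q"
  shows "\<exists>x. (\<forall>i. x i \<in> \<int>) \<and> (\<forall>i>r. x i = 0) \<and> mpoly_eval G (x(j := x j - mpoly_eval L x / c)) \<noteq> 0"
proof (rule ccontr)
  assume vanishes: "\<not> ?thesis"
  define \<rho> :: "nat \<Rightarrow> 'a mpoly" where "\<rho> i = (if i \<le> r then mpoly_var i else 0)" for i
  define \<sigma> where "\<sigma> = \<rho>(j := mpoly_var j - mpoly_const (inverse c) * L)"
  have "in_vars r (\<sigma> i)" for i
    using L \<open>j \<le> r\<close>
    by (simp add: \<sigma>_def \<rho>_def in_vars_diff in_vars_mult in_vars_mpoly_var in_vars_mpoly_const)
  then have "in_vars r (hom_eval mpoly_const \<sigma> G)"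
    by (rule in_vars_hom_eval)
  then have "hom_eval mpoly_const \<sigma> G = 0"
  proof (rule mpoly_eq_0_if_vanishes_on_int_points)
    fix x :: "nat \<Rightarrow> 'a"
    assume x: "\<forall>i. x i \<in> \<int>" "\<forall>i>r. x i = 0"
    have "(\<lambda>i. mpoly_eval (\<sigma> i) x) = x(j := x j - mpoly_eval L x / c)"
      using x(2) \<open>j \<le> r\<close>
      by (auto simp: \<sigma>_def \<rho>_def mpoly_eval_eq_hom_eval hom_eval_diff hom_eval_mult hom_eval_var
          hom_eval_const is_ring_hom_id field_simps)
    moreover have "mpoly_eval G (x(j := x j - mpoly_eval L x / c)) = 0"
      using vanishes x by blast
    ultimately show "mpoly_eval (hom_eval mpoly_const \<sigma> G) x = 0"
      by (simp add: mpoly_eval_eq_hom_eval hom_eval_hom_eval)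
  qed
  moreover have "L dvd hom_eval mpoly_const \<rho> G - hom_eval mpoly_const \<sigma> G"
    by (rule dvd_hom_eval_diff) (use \<open>j \<le> r\<close> in \<open>simp add: \<sigma>_def \<rho>_def\<close>)
  moreover have "hom_eval mpoly_const \<rho> G = G"
    using G by (rule hom_eval_eq_self_if_in_vars) (simp add: \<rho>_def)
  ultimately have "L dvd G"
    by simp
  then show False
    using dvd_imp_factor_in_vars[OF L G] not_dvd by metis
qed

lemma linear_form_coordinate:
  assumes "linear_form r L" "L \<noteq> 0"
  obtains j where "j \<le> r" "Poly_Mapping.lookup L (Poly_Mapping.single j 1) \<noteq> 0"
proof -
  obtain m where m: "m \<in> Poly_Mapping.keys L"
    using \<open>L \<noteq> 0\<close> keys_eq_empty by blast
  then obtain j where j: "Poly_Mapping.single j 1 \<in> Poly_Mapping.keys L"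
    using assms(1) linear_form_monomial unfolding linear_form_def by blast
  then have "j \<le> r"
    using assms(1) by (fastforce simp: linear_form_def in_vars_def)
  with j show ?thesis
    using that by (simp add: in_keys_iff)
qed

lemma mpoly_eval_update_eq_poly:
  "mpoly_eval P (x(j := x j + t)) = poly (hom_eval (\<lambda>c. [:c:]) (\<lambda>i. if i = j then [:x j, 1:] else [:x i:]) P) t"
  unfolding poly_hom_eval_const_poly by (rule arg_cong[where f = "mpoly_eval P"]) auto

lemma simple_linear_factor_along_line:
  fixes L F :: "'a::{field, ring_char_0} mpoly"
  assumes lin: "linear_form r L" and "L \<noteq> 0"
    and dvd: "dvd_in r L F" and not_dvd: "\<not> dvd_in r (L ^ 2) F"
  shows "\<exists>a j c t0 g. (\<forall>i>r. a i = 0) \<and> j \<le> r \<and> c \<noteq> 0 \<and> poly g t0 \<noteq> 0 \<and>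
    (\<forall>t. mpoly_eval F ((\<lambda>i. of_int (a i))(j := of_int (a j) + t)) = c * ((t - t0) * poly g t))"
proof -
  obtain G where G: "in_vars r G" and F: "in_vars r F" and FLG: "F = L * G"
    using dvd unfolding dvd_in_def by blast
  have L: "in_vars r L" "homogeneous 1 L"
    using lin unfolding linear_form_def by auto
  obtain j where "j \<le> r" and "Poly_Mapping.lookup L (Poly_Mapping.single j 1) \<noteq> 0" (is "?c \<noteq> 0")
    using linear_form_coordinate[OF lin \<open>L \<noteq> 0\<close>] by blast
  have "\<nexists>Q. in_vars r Q \<and> G = L * Q"
    using not_dvd F in_vars_power[OF L(1), of 2] unfolding FLG dvd_in_def
    by (auto simp: power2_eq_square mult.assoc)
  then obtain x where x: "\<forall>i. x i \<in> \<int>" "\<forall>i>r. x i = 0"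
    and nonzero: "mpoly_eval G (x(j := x j - mpoly_eval L x / ?c)) \<noteq> 0"
    using nonvanishing_on_hyperplane_if_not_dvd[OF L(1) G \<open>j \<le> r\<close>] by blast
  have "\<forall>i. \<exists>k. x i = of_int k"
    using x(1) by (auto elim: Ints_cases)
  then obtain a where a: "(\<lambda>i. of_int (a i)) = x"
    by (metis ext)
  define t0 where "t0 = - (mpoly_eval L x / ?c)"
  define g where "g = hom_eval (\<lambda>c. [:c:]) (\<lambda>i. if i = j then [:x j, 1:] else [:x i:]) G"
  have g: "poly g t = mpoly_eval G (x(j := x j + t))" for t
    unfolding g_def by (rule mpoly_eval_update_eq_poly[symmetric])
  have "mpoly_eval F (x(j := x j + t)) = ?c * ((t - t0) * poly g t)" for t
  proof -
    have "mpoly_eval F (x(j := x j + t)) = mpoly_eval L (x(j := x j + t)) * poly g t"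
      by (simp add: FLG g mpoly_eval_eq_hom_eval hom_eval_mult[OF is_ring_hom_id])
    also have "mpoly_eval L (x(j := x j + t)) = mpoly_eval L x + t * ?c"
      by (rule mpoly_eval_linear_update[OF L(2)])
    also have "\<dots> = ?c * (t - t0)"
      using \<open>?c \<noteq> 0\<close> by (simp add: t0_def field_simps)
    finally show ?thesis
      by (simp only: mult.assoc)
  qed
  moreover have "poly g t0 \<noteq> 0"
    using nonzero by (simp add: g t0_def)
  moreover have "\<forall>i>r. a i = 0"
    using x(2) a by (metis of_int_eq_0_iff)
  ultimately show ?thesis
    using \<open>j \<le> r\<close> \<open>?c \<noteq> 0\<close> a by blast
qed

lemma mpoly_eval_scaled_int_point:
  fixes F :: "int mpoly" and q u :: int
  assumes "homogeneous d F" "(of_int q :: 'a::field) \<noteq> 0"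
  shows "of_int (mpoly_eval F ((\<lambda>i. q * a i)(j := q * a j + u)))
    = (of_int q :: 'a) ^ d * mpoly_eval (Poly_Mapping.map of_int F)
        ((\<lambda>i. of_int (a i))(j := of_int (a j) + of_int u / of_int q))"
    (is "_ = _ * mpoly_eval ?F ?z")
proof -
  let ?y = "(\<lambda>i. q * a i)(j := q * a j + u)"
  have "of_int (mpoly_eval F ?y) = mpoly_eval ?F (\<lambda>i. of_int (?y i))"
    by (rule mpoly_eval_map_of_int[symmetric])
  also have "(\<lambda>i. of_int (?y i)) = (\<lambda>i. of_int q * ?z i)"
    using assms(2) by (auto simp: field_simps)
  also have "mpoly_eval ?F (\<lambda>i. of_int q * ?z i) = of_int q ^ d * mpoly_eval ?F ?z"
    using assms(1) by (intro mpoly_eval_homogeneous_scale homogeneous_map_of_int)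
  finally show ?thesis .
qed

section \<open>p-adic integers as digit sequences\<close>

lemma padic_digits_nonneg: "0 \<le> padic_digits (z :: 'p::prime_card padic_int) n"
  using padic_digits[of z] unfolding padic_seqs_def by blast

lemma padic_digits_less: "padic_digits (z :: 'p::prime_card padic_int) n < int CARD('p) ^ n"
  using padic_digits[of z] unfolding padic_seqs_def by blast

lemma padic_digits_0 [simp]: "padic_digits (z :: 'p::prime_card padic_int) 0 = 0"
  using padic_digits_nonneg[of z 0] padic_digits_less[of z 0] by simp

lemma padic_digits_mod:
  "m \<le> n \<Longrightarrow> padic_digits (z :: 'p::prime_card padic_int) n mod int CARD('p) ^ m = padic_digits z m"
  using padic_seqs_mod_le[OF padic_digits card_pos] by blast

lemma padic_int_eqI: "(\<And>n. padic_digits z n = padic_digits w n) \<Longrightarrow> z = w"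
  by (simp add: padic_digits_inject[symmetric] fun_eq_iff)

lemma padic_digits_zero: "padic_digits (0 :: 'p::prime_card padic_int) n = 0"
  by (simp add: zero_padic_int.rep_eq)

lemma padic_digits_one: "padic_digits (1 :: 'p::prime_card padic_int) n = 1 mod int CARD('p) ^ n"
  by (simp add: one_padic_int.rep_eq)

lemma padic_digits_add:
  "padic_digits (z + w :: 'p::prime_card padic_int) n = (padic_digits z n + padic_digits w n) mod int CARD('p) ^ n"
  by (simp add: plus_padic_int.rep_eq)

lemma padic_digits_mult:
  "padic_digits (z * w :: 'p::prime_card padic_int) n = (padic_digits z n * padic_digits w n) mod int CARD('p) ^ n"
  by (simp add: times_padic_int.rep_eq)

lemma padic_digits_uminus:
  "padic_digits (- z :: 'p::prime_card padic_int) n = (- padic_digits z n) mod int CARD('p) ^ n"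
  by (simp add: uminus_padic_int.rep_eq)

lemma padic_digits_diff:
  "padic_digits (z - w :: 'p::prime_card padic_int) n = (padic_digits z n - padic_digits w n) mod int CARD('p) ^ n"
  unfolding minus_padic_int_def padic_digits_add padic_digits_uminus
  by (simp only: mod_add_right_eq diff_conv_add_uminus)

lemma padic_digits_of_int: "padic_digits (of_int k :: 'p::prime_card padic_int) n = k mod int CARD('p) ^ n"
proof (induction k rule: int_induct[where k = 0])
  case base
  then show ?case by (simp add: padic_digits_zero)
next
  case (step1 i)
  then show ?case by (simp add: padic_digits_add padic_digits_one mod_add_eq)
next
  case (step2 i)
  then show ?case by (simp add: padic_digits_diff padic_digits_one mod_diff_eq)
qed

lemma padic_digits_prime_power:
  "padic_digits (of_nat CARD('p) ^ k :: 'p::prime_card padic_int) n = int CARD('p) ^ k mod int CARD('p) ^ n"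
  using padic_digits_of_int[of "int CARD('p) ^ k" n, where 'p='p] by simp

lemma padic_digits_prime_power_mult:
  assumes "n \<le> k"
  shows "padic_digits (of_nat CARD('p) ^ k * y :: 'p::prime_card padic_int) n = 0"
proof -
  have "int CARD('p) ^ k mod int CARD('p) ^ n = 0"
    using assms by (simp add: le_imp_power_dvd)
  then show ?thesis
    by (simp only: padic_digits_mult padic_digits_prime_power) simp
qed

lemma int_less_card_power: "int k < int CARD('p::prime_card) ^ k"
proof -
  have "int k < 2 ^ k"
    using less_exp[of k] by (metis of_nat_less_iff of_nat_numeral of_nat_power)
  also have "(2::int) ^ k \<le> int CARD('p) ^ k"
    using prime_card_gt1[where 'a='p] by (intro power_mono) auto
  finally show ?thesis .
qed

instance padic_int :: (prime_card) ring_char_0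
proof
  show "inj (of_nat :: nat \<Rightarrow> 'a padic_int)"
  proof (rule injI)
    fix a b :: nat
    assume "(of_nat a :: 'a padic_int) = of_nat b"
    then have "int a mod int CARD('a) ^ (a + b) = int b mod int CARD('a) ^ (a + b)"
      by (metis of_int_of_nat_eq padic_digits_of_int)
    moreover have "int a < int CARD('a) ^ (a + b)" and "int b < int CARD('a) ^ (a + b)"
      using int_less_card_power[of "a + b", where 'p='a] by linarith+
    ultimately show "a = b"
      by simp
  qed
qed

instance fract :: ("{idom, ring_char_0}") ring_char_0
proof
  show "inj (of_nat :: nat \<Rightarrow> 'a fract)"
    by (rule injI) (simp add: of_nat_fract eq_fract)
qed

lemma padic_digits_eq_0_imp_multiple:
  fixes z :: "'p::prime_card padic_int"
  assumes z: "padic_digits z n = 0"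
  shows "\<exists>w. z = of_nat CARD('p) ^ n * w"
proof -
  let ?p = "int CARD('p)"
  have p: "?p > 0"
    by (rule card_pos)
  define f where "f m = padic_digits z (m + n) div ?p ^ n" for m
  have f: "?p ^ n * f m = padic_digits z (m + n)" for m
    using padic_digits_mod[of n "m + n" z] z unfolding f_def by (simp add: dvd_eq_mod_eq_0)
  have "f \<in> padic_seqs ?p"
    unfolding padic_seqs_def
  proof (intro CollectI allI conjI)
    fix m
    show "0 \<le> f m"
      unfolding f_def using padic_digits_nonneg[of z] p by (simp add: pos_imp_zdiv_nonneg_iff)
    have "?p ^ n * f m < ?p ^ n * ?p ^ m"
      unfolding f using padic_digits_less[of z "m + n"] by (simp add: power_add mult_ac)
    then show "f m < ?p ^ m"
      using p by simp
    have "?p ^ n * f m = padic_digits z (Suc m + n) mod ?p ^ (m + n)"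
      using padic_digits_mod[of "m + n" "Suc m + n" z] f[of m] by simp
    also have "\<dots> = ?p ^ n * f (Suc m) mod (?p ^ n * ?p ^ m)"
      by (simp only: f[symmetric] add.commute[of m n] power_add)
    also have "\<dots> = ?p ^ n * (f (Suc m) mod ?p ^ m)"
      by (rule mod_mult_mult1)
    finally show "f (Suc m) mod ?p ^ m = f m"
      using p by simp
  qed
  then have digits: "padic_digits (Abs_padic_int f :: 'p padic_int) = f"
    by (rule Abs_padic_int_inverse)
  have "z = of_nat CARD('p) ^ n * Abs_padic_int f"
  proof (rule padic_int_eqI)
    fix m
    have "padic_digits (of_nat CARD('p) ^ n * Abs_padic_int f :: 'p padic_int) m = ?p ^ n * f m mod ?p ^ m"
      by (simp add: padic_digits_mult padic_digits_prime_power digits mod_mult_left_eq)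
    also have "\<dots> = padic_digits z m"
      using padic_digits_mod[of m "m + n" z] f[of m] by simp
    finally show "padic_digits z m = padic_digits (of_nat CARD('p) ^ n * Abs_padic_int f :: 'p padic_int) m"
      by (rule sym)
  qed
  then show ?thesis ..
qed

lemma inverse_mod_unique:
  fixes a w w' M :: int
  assumes "coprime a M" "0 \<le> w" "w < M" "0 \<le> w'" "w' < M"
    and "[a * w = 1] (mod M)" "[a * w' = 1] (mod M)"
  shows "w = w'"
proof -
  have "[a * w = a * w'] (mod M)"
    using assms(6,7) by (metis cong_sym cong_trans)
  then have "[w = w'] (mod M)"
    using assms(1) by (simp add: cong_mult_lcancel)
  then show ?thesis
    using assms(2-5) by (rule cong_less_imp_eq_int[rotated 4])
qed

lemma padic_digits_coprime:
  fixes z :: "'p::prime_card padic_int"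
  assumes "\<not> int CARD('p) dvd padic_digits z 1"
  shows "coprime (padic_digits z n) (int CARD('p) ^ n)"
proof (cases n)
  case (Suc k)
  have "padic_digits z n mod int CARD('p) = padic_digits z 1"
    using padic_digits_mod[of 1 n z] Suc by simp
  then have "\<not> int CARD('p) dvd padic_digits z n"
    using assms by (metis dvd_mod_iff dvd_refl)
  moreover have "prime (int CARD('p))"
    using prime_card[where 'a='p] by simp
  ultimately have "coprime (int CARD('p)) (padic_digits z n)"
    by (intro prime_imp_coprime)
  then show ?thesis
    by (simp add: coprime_commute)
qed simp

lemma padic_int_unitI:
  fixes z :: "'p::prime_card padic_int"
  assumes "\<not> int CARD('p) dvd padic_digits z 1"
  shows "\<exists>w. z * w = 1"
proof -
  let ?p = "int CARD('p)"
  note coprime = padic_digits_coprime[OF assms]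
  define inv where "inv n = (SOME w. 0 \<le> w \<and> w < ?p ^ n \<and> [padic_digits z n * w = 1] (mod ?p ^ n))" for n
  have inv: "0 \<le> inv n \<and> inv n < ?p ^ n \<and> [padic_digits z n * inv n = 1] (mod ?p ^ n)" for n
  proof -
    obtain x where "[padic_digits z n * x = 1] (mod ?p ^ n)"
      using cong_solve_coprime_int[OF coprime] by blast
    then have "[padic_digits z n * (x mod ?p ^ n) = 1] (mod ?p ^ n)"
      by (simp add: cong_def mod_mult_right_eq)
    then have "\<exists>w. 0 \<le> w \<and> w < ?p ^ n \<and> [padic_digits z n * w = 1] (mod ?p ^ n)"
      using card_pos[where 'a='p] by (intro exI[of _ "x mod ?p ^ n"]) simp
    then show ?thesis
      unfolding inv_def by (rule someI_ex)
  qed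
  have "inv \<in> padic_seqs ?p"
    unfolding padic_seqs_def
  proof (intro CollectI allI conjI)
    fix n
    show "0 \<le> inv n" "inv n < ?p ^ n"
      using inv by auto
    have "padic_digits z n = padic_digits z (Suc n) mod ?p ^ n"
      using padic_digits_mod[of n "Suc n" z] by simp
    then have "[padic_digits z n * (inv (Suc n) mod ?p ^ n) = padic_digits z (Suc n) * inv (Suc n)] (mod ?p ^ n)"
      by (simp add: cong_def mod_mult_eq)
    moreover have "[padic_digits z (Suc n) * inv (Suc n) = 1] (mod ?p ^ n)"
      using inv[of "Suc n"] by (auto intro: cong_dvd_modulus simp: le_imp_power_dvd)
    ultimately show "inv (Suc n) mod ?p ^ n = inv n"
      using inv[of n] card_pos[where 'a='p] coprime[of n]
      by (intro inverse_mod_unique[of "padic_digits z n" "?p ^ n"]) (auto intro: cong_trans)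
  qed
  then have digits: "padic_digits (Abs_padic_int inv :: 'p padic_int) = inv"
    by (rule Abs_padic_int_inverse)
  have "z * Abs_padic_int inv = 1"
    by (rule padic_int_eqI) (use inv in \<open>simp add: padic_digits_mult padic_digits_one digits cong_def\<close>)
  then show ?thesis ..
qed

lemma padic_int_valuation:
  fixes z :: "'p::prime_card padic_int"
  assumes "z \<noteq> 0"
  obtains v where "padic_digits z v = 0" "padic_digits z (Suc v) \<noteq> 0"
proof -
  obtain n where "padic_digits z n \<noteq> 0"
    using assms padic_int_eqI[of z 0] by (auto simp: padic_digits_zero)
  then have ex: "\<exists>v. padic_digits z (Suc v) \<noteq> 0"
    by (cases n) auto
  define v where "v = (LEAST v. padic_digits z (Suc v) \<noteq> 0)"
  have "padic_digits z v = 0"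
  proof (cases v)
    case (Suc k)
    then show ?thesis
      using not_less_Least[of k "\<lambda>v. padic_digits z (Suc v) \<noteq> 0"] by (simp add: v_def)
  qed simp
  moreover have "padic_digits z (Suc v) \<noteq> 0"
    unfolding v_def by (rule LeastI_ex[OF ex])
  ultimately show ?thesis
    using that by blast
qed

lemma padic_int_eq_prime_power_mult_unit:
  fixes z :: "'p::prime_card padic_int"
  assumes "z \<noteq> 0"
  shows "\<exists>v w w'. z = of_nat CARD('p) ^ v * w \<and> w * w' = 1"
proof -
  let ?p = "int CARD('p)"
  obtain v where "padic_digits z v = 0" and z_Suc: "padic_digits z (Suc v) \<noteq> 0"
    using padic_int_valuation[OF assms] by blast
  then obtain w where w: "z = of_nat CARD('p) ^ v * w"
    using padic_digits_eq_0_imp_multiple by blast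
  have "\<not> ?p dvd padic_digits w 1"
  proof
    assume "?p dvd padic_digits w 1"
    moreover have "padic_digits w (Suc v) mod ?p = padic_digits w 1"
      using padic_digits_mod[of 1 "Suc v" w] by simp
    ultimately have "?p dvd padic_digits w (Suc v)"
      by (metis dvd_mod_iff dvd_refl)
    then have "?p ^ Suc v dvd ?p ^ v * padic_digits w (Suc v)"
      by simp
    then have "padic_digits z (Suc v) = 0"
      unfolding w by (simp add: padic_digits_mult padic_digits_prime_power mod_mult_left_eq dvd_eq_mod_eq_0)
    then show False
      using z_Suc by simp
  qed
  then show ?thesis
    using w padic_int_unitI by blast
qed

section \<open>Balls in Q_p\<close>

abbreviation padic_prime :: "'p::prime_card padic" where
  "padic_prime \<equiv> of_nat CARD('p)"

lemma padic_integer_add [simp]: "padic_integer (a + b) = padic_integer a + padic_integer b"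
  by (simp add: padic_integer_def)

lemma padic_integer_mult [simp]: "padic_integer (a * b) = padic_integer a * padic_integer b"
  by (simp add: padic_integer_def)

lemma padic_integer_diff [simp]: "padic_integer (a - b) = padic_integer a - padic_integer b"
  by (simp add: padic_integer_def)

lemma padic_integer_uminus [simp]: "padic_integer (- a) = - padic_integer a"
  by (simp add: padic_integer_def)

lemma padic_integer_of_nat [simp]: "padic_integer (of_nat k) = of_nat k"
  by (simp add: padic_integer_def of_nat_fract)

lemma padic_integer_of_int [simp]: "padic_integer (of_int k) = of_int k"
  by (cases k rule: int_cases2) simp_all

lemma padic_integer_one [simp]: "padic_integer 1 = 1"
  using padic_integer_of_nat[of 1] by simp

lemma padic_integer_power [simp]: "padic_integer (a ^ n) = padic_integer a ^ n"
  by (induction n) simp_all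

lemma padic_ball_iff: "x \<in> padic_ball a n \<longleftrightarrow> x - a \<in> padic_ball 0 n"
  by (simp add: padic_ball_def)

lemma padic_ball_0_iff: "x \<in> padic_ball 0 n \<longleftrightarrow> (\<exists>z. x = padic_prime ^ n * padic_integer z)"
  by (simp add: padic_ball_def)

lemma padic_ball_0_add:
  assumes "x \<in> padic_ball 0 n" "y \<in> padic_ball 0 n"
  shows "x + y \<in> padic_ball 0 n"
proof -
  obtain a b where "x = padic_prime ^ n * padic_integer a" "y = padic_prime ^ n * padic_integer b"
    using assms unfolding padic_ball_0_iff by blast
  then show ?thesis
    unfolding padic_ball_0_iff by (intro exI[of _ "a + b"]) (simp add: distrib_left)
qed

lemma padic_ball_0_diff:
  assumes "x \<in> padic_ball 0 n" "y \<in> padic_ball 0 n"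
  shows "x - y \<in> padic_ball 0 n"
proof -
  obtain a b where "x = padic_prime ^ n * padic_integer a" "y = padic_prime ^ n * padic_integer b"
    using assms unfolding padic_ball_0_iff by blast
  then show ?thesis
    unfolding padic_ball_0_iff by (intro exI[of _ "a - b"]) (simp add: right_diff_distrib)
qed

lemma padic_ball_0_mult:
  assumes "x \<in> padic_ball 0 m" "y \<in> padic_ball 0 n"
  shows "x * y \<in> padic_ball 0 (m + n)"
proof -
  obtain a b where "x = padic_prime ^ m * padic_integer a" "y = padic_prime ^ n * padic_integer b"
    using assms unfolding padic_ball_0_iff by blast
  then show ?thesis
    unfolding padic_ball_0_iff by (intro exI[of _ "a * b"]) (simp add: power_add mult_ac)
qed

lemma zero_in_padic_ball_0: "0 \<in> padic_ball 0 n"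
  unfolding padic_ball_0_iff by (intro exI[of _ 0]) (simp add: padic_integer_def fract_collapse)

lemma padic_integer_in_padic_ball_0: "padic_integer z \<in> padic_ball 0 0"
  unfolding padic_ball_0_iff by auto

lemma one_in_padic_ball_0: "1 \<in> padic_ball 0 0"
  using padic_integer_in_padic_ball_0[of 1] by simp

lemma padic_prime_power_in_padic_ball_0: "padic_prime ^ n \<in> padic_ball 0 n"
  unfolding padic_ball_0_iff by (metis mult.right_neutral padic_integer_one)

lemma padic_ball_mono:
  fixes x :: "'p::prime_card padic"
  assumes "m \<le> n" "x \<in> padic_ball a n"
  shows "x \<in> padic_ball a m"
proof -
  obtain z where z: "x - a = padic_prime ^ n * padic_integer z"
    using assms(2) unfolding padic_ball_def by blast
  have "padic_prime ^ n = (padic_prime ^ m * padic_prime ^ (n - m) :: 'p padic)"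
    using assms(1) by (simp flip: power_add)
  then show ?thesis
    unfolding padic_ball_def using z
    by (intro CollectI exI[of _ "of_nat CARD('p) ^ (n - m) * z"]) (simp add: mult.assoc)
qed

lemma padic_ball_0_div_prime_power:
  assumes "x \<in> padic_ball 0 (n + k)"
  shows "x / padic_prime ^ k \<in> padic_ball 0 n"
proof -
  obtain z where "x = padic_prime ^ k * (padic_prime ^ n * padic_integer z)"
    using assms unfolding padic_ball_0_iff by (auto simp: power_add mult_ac)
  then show ?thesis
    unfolding padic_ball_0_iff by auto
qed

lemma padic_eq_integer_div_prime_power:
  "\<exists>z k. (x :: 'p::prime_card padic) = padic_integer z / padic_prime ^ k"
proof -
  obtain a b where x: "x = Fraction_Field.Fract a b" and "b \<noteq> 0"
    by (cases x) auto
  then obtain v w w' where b: "b = of_nat CARD('p) ^ v * w" and "w * w' = 1"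
    using padic_int_eq_prime_power_mult_unit by blast
  then have "inverse (padic_integer w) = padic_integer w'"
    by (intro inverse_unique) (simp flip: padic_integer_mult)
  moreover have "x = padic_integer a / padic_integer b"
    using \<open>b \<noteq> 0\<close> by (simp add: x padic_integer_def)
  moreover have "padic_integer b = padic_prime ^ v * padic_integer w"
    by (simp add: b)
  ultimately have "x = padic_integer (a * w') / padic_prime ^ v"
    by (simp add: divide_inverse mult_ac)
  then show ?thesis
    by blast
qed

lemma padic_bounded: "\<exists>k. padic_prime ^ k * (x :: 'p::prime_card padic) \<in> padic_ball 0 0"
proof -
  obtain z k where "x = padic_integer z / padic_prime ^ k"
    using padic_eq_integer_div_prime_power by blast
  then have "padic_prime ^ k * x = padic_integer z"
    by simp
  then show ?thesis
    using padic_integer_in_padic_ball_0 by metis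
qed

lemma padic_ball_0_mult_bounded:
  fixes x y :: "'p::prime_card padic"
  assumes "padic_prime ^ k * x \<in> padic_ball 0 0" "y \<in> padic_ball 0 (n + k)"
  shows "x * y \<in> padic_ball 0 n"
proof -
  have "y / padic_prime ^ k \<in> padic_ball 0 n"
    using assms(2) by (rule padic_ball_0_div_prime_power)
  then have "(padic_prime ^ k * x) * (y / padic_prime ^ k) \<in> padic_ball 0 (0 + n)"
    using assms(1) by (rule padic_ball_0_mult[rotated])
  then show ?thesis
    by simp
qed

lemma padic_integer_approx_int: "\<exists>u::int. padic_integer (z :: 'p::prime_card padic_int) - of_int u \<in> padic_ball 0 n"
proof -
  let ?u = "padic_digits z n"
  have "padic_digits (z - of_int ?u) n = 0"
    by (simp add: padic_digits_diff padic_digits_of_int mod_diff_right_eq)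
  then obtain w where "z - of_int ?u = of_nat CARD('p) ^ n * w"
    using padic_digits_eq_0_imp_multiple by blast
  then have "padic_integer z - of_int ?u = padic_prime ^ n * padic_integer w"
    by (metis padic_integer_diff padic_integer_mult padic_integer_of_int padic_integer_of_nat padic_integer_power)
  then show ?thesis
    unfolding padic_ball_0_iff by blast
qed

lemma padic_approx_int_div_prime_power:
  "\<exists>K0. \<forall>K\<ge>K0. \<exists>u::int. of_int u / padic_prime ^ K \<in> padic_ball (x :: 'p::prime_card padic) n"
proof -
  obtain z k where x: "x = padic_integer z / padic_prime ^ k"
    using padic_eq_integer_div_prime_power by blast
  have "\<exists>u::int. of_int u / padic_prime ^ K \<in> padic_ball x n" if "k \<le> K" for K
  proof -
    have x': "x = padic_integer (z * of_nat CARD('p) ^ (K - k)) / padic_prime ^ K"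
      using that by (simp add: x power_diff)
    obtain u where "padic_integer (z * of_nat CARD('p) ^ (K - k)) - of_int u \<in> padic_ball 0 (n + K)"
      using padic_integer_approx_int by blast
    then have "x - of_int u / padic_prime ^ K \<in> padic_ball 0 n"
      unfolding x' diff_divide_distrib[symmetric] by (rule padic_ball_0_div_prime_power)
    then have "0 - (x - of_int u / padic_prime ^ K) \<in> padic_ball 0 n"
      by (rule padic_ball_0_diff[OF zero_in_padic_ball_0])
    then show ?thesis
      unfolding padic_ball_iff[of _ x] by (intro exI[of _ u]) simp
  qed
  then show ?thesis
    by blast
qed

lemma padic_ball_1_mult:
  fixes x y :: "'p::prime_card padic"
  assumes "x \<in> padic_ball 1 n" "y \<in> padic_ball 1 n"
  shows "x * y \<in> padic_ball 1 n"
proof -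
  have x: "x - 1 \<in> padic_ball 0 n" and y: "y - 1 \<in> padic_ball 0 n"
    using assms unfolding padic_ball_iff[of _ 1] by auto
  have "(x - 1) * (y - 1) \<in> padic_ball 0 (n + 0)"
    using x padic_ball_mono[of 0 n, OF _ y] by (intro padic_ball_0_mult) auto
  then have "(x - 1) * (y - 1) + ((x - 1) + (y - 1)) \<in> padic_ball 0 n"
    using x y by (intro padic_ball_0_add) auto
  then show ?thesis
    unfolding padic_ball_iff[of _ 1] by (simp add: algebra_simps)
qed

lemma padic_ball_1_inverse:
  fixes x :: "'p::prime_card padic"
  assumes "x \<in> padic_ball 1 (Suc n)"
  shows "x \<noteq> 0" "inverse x \<in> padic_ball 1 (Suc n)"
proof -
  obtain y where y: "x - 1 = padic_prime ^ Suc n * padic_integer y"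
    using assms unfolding padic_ball_iff[of _ 1] padic_ball_0_iff by blast
  define u :: "'p padic_int" where "u = 1 + of_nat CARD('p) ^ Suc n * y"
  have "padic_digits (of_nat CARD('p) ^ Suc n * y) 1 = 0"
    by (rule padic_digits_prime_power_mult) simp
  then have "padic_digits u 1 = 1"
    using prime_card_gt1[where 'a='p] by (simp add: u_def padic_digits_add padic_digits_one)
  then obtain w where "u * w = 1"
    using padic_int_unitI[of u] prime_card_gt1[where 'a='p] by (auto simp: zdvd_not_zless)
  moreover have "x = padic_integer u"
    using y by (simp add: u_def algebra_simps)
  ultimately have x: "x * padic_integer w = 1"
    by (simp flip: padic_integer_mult)
  then show "x \<noteq> 0"
    by auto
  have "inverse x = padic_integer w"
    using x by (rule inverse_unique)
  then have "inverse x - 1 = - (x - 1) * padic_integer w"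
    using \<open>x \<noteq> 0\<close> by (simp add: field_simps flip: \<open>inverse x = padic_integer w\<close>)
  also have "\<dots> \<in> padic_ball 0 (Suc n + 0)"
    using assms padic_integer_in_padic_ball_0 unfolding padic_ball_iff[of _ 1]
    by (intro padic_ball_0_mult) (simp_all add: padic_ball_0_diff[OF zero_in_padic_ball_0, of "x - 1", simplified])
  finally show "inverse x \<in> padic_ball 1 (Suc n)"
    unfolding padic_ball_iff[of _ 1] by simp
qed

lemma poly_bounded_on_padic_integers:
  "\<exists>M. \<forall>s \<in> padic_ball 0 0. padic_prime ^ M * poly (q :: 'p::prime_card padic poly) s \<in> padic_ball 0 0"
proof (induction q)
  case 0
  then show ?case
    by (simp add: zero_in_padic_ball_0)
next
  case (pCons a q)
  obtain M where M: "\<forall>s \<in> padic_ball 0 0. padic_prime ^ M * poly q s \<in> padic_ball 0 0"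
    using pCons.IH by blast
  obtain k where k: "padic_prime ^ k * a \<in> padic_ball 0 0"
    using padic_bounded by blast
  have "padic_prime ^ (k + M) * poly (pCons a q) s \<in> padic_ball 0 0" if s: "s \<in> padic_ball 0 0" for s
  proof -
    have "padic_prime ^ M * (padic_prime ^ k * a) \<in> padic_ball 0 (M + 0)"
      using k by (intro padic_ball_0_mult padic_prime_power_in_padic_ball_0)
    moreover have "(padic_prime ^ k * s) * (padic_prime ^ M * poly q s) \<in> padic_ball 0 ((k + 0) + 0)"
      using s M by (intro padic_ball_0_mult padic_prime_power_in_padic_ball_0) auto
    ultimately have "padic_prime ^ M * (padic_prime ^ k * a) + (padic_prime ^ k * s) * (padic_prime ^ M * poly q s)
        \<in> padic_ball 0 0"
      by (intro padic_ball_0_add padic_ball_mono[of 0 M] padic_ball_mono[of 0 k]) auto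
    then show ?thesis
      by (simp add: power_add algebra_simps)
  qed
  then show ?case
    by blast
qed

section \<open>Ratios of values near a simple root\<close>

lemma padic_approx_pair_int_div_prime_power:
  fixes x y :: "'p::prime_card padic"
  shows "\<exists>K u v. of_int u / padic_prime ^ K \<in> padic_ball x n \<and> of_int v / padic_prime ^ K \<in> padic_ball y n"
proof -
  obtain Kx where "\<forall>K\<ge>Kx. \<exists>u::int. of_int u / padic_prime ^ K \<in> padic_ball x n"
    using padic_approx_int_div_prime_power by blast
  moreover obtain Ky where "\<forall>K\<ge>Ky. \<exists>v::int. of_int v / padic_prime ^ K \<in> padic_ball y n"
    using padic_approx_int_div_prime_power by blast
  ultimately show ?thesis
    by (meson max.cobounded1 max.cobounded2)
qed

lemma poly_quotient_near_nonroot: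
  fixes g :: "'p::prime_card padic poly"
  assumes "poly g t0 \<noteq> 0"
  shows "\<exists>N. \<forall>t \<in> padic_ball t0 N. poly g t / poly g t0 \<in> padic_ball 1 E"
proof -
  obtain a H where aH: "pcompose g [:t0, 1:] = pCons a H"
    by (cases "pcompose g [:t0, 1:]") auto
  have shift: "poly g (t0 + s) = a + s * poly H s" for s
  proof -
    have "poly g (t0 + s) = poly (pcompose g [:t0, 1:]) s"
      by (simp add: poly_pcompose)
    then show ?thesis
      by (simp add: aH)
  qed
  have expand: "poly g t = poly g t0 + (t - t0) * poly H (t - t0)" for t
    using shift[of 0] shift[of "t - t0"] by simp
  obtain M where M: "\<forall>s \<in> padic_ball 0 0. padic_prime ^ M * poly H s \<in> padic_ball 0 0"
    using poly_bounded_on_padic_integers by blast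
  obtain k where k: "padic_prime ^ k * inverse (poly g t0) \<in> padic_ball 0 0"
    using padic_bounded by blast
  have "poly g t / poly g t0 \<in> padic_ball 1 E" if t: "t \<in> padic_ball t0 ((E + k) + M)" for t
  proof -
    have s: "t - t0 \<in> padic_ball 0 ((E + k) + M)"
      using t unfolding padic_ball_iff[of _ t0] .
    have "t - t0 \<in> padic_ball 0 0"
      using padic_ball_mono[OF _ s] by simp
    then have "padic_prime ^ M * poly H (t - t0) \<in> padic_ball 0 0"
      by (rule M[rule_format])
    then have "poly H (t - t0) * (t - t0) \<in> padic_ball 0 (E + k)"
      using s by (rule padic_ball_0_mult_bounded)
    then have "inverse (poly g t0) * (poly H (t - t0) * (t - t0)) \<in> padic_ball 0 E"
      using k by (rule padic_ball_0_mult_bounded[rotated])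
    then show ?thesis
      unfolding padic_ball_iff[of _ 1] using assms by (subst expand) (simp add: field_simps)
  qed
  then show ?thesis
    by blast
qed

lemma padic_ball_bounded:
  fixes a q :: "'p::prime_card padic"
  assumes "padic_prime ^ k * a \<in> padic_ball 0 0" "q \<in> padic_ball a 0"
  shows "padic_prime ^ k * q \<in> padic_ball 0 0"
proof -
  have "padic_prime ^ k * (q - a) \<in> padic_ball 0 (k + 0)"
    using assms(2) unfolding padic_ball_iff[of _ a]
    by (intro padic_ball_0_mult padic_prime_power_in_padic_ball_0)
  then have "padic_prime ^ k * a + padic_prime ^ k * (q - a) \<in> padic_ball 0 0"
    using assms(1) padic_ball_mono[of 0 "k + 0"] by (blast intro: padic_ball_0_add)
  then show ?thesis
    by (simp add: algebra_simps)
qed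

lemma padic_ball_mult_principal_unit:
  fixes \<beta> q w :: "'p::prime_card padic"
  assumes "padic_prime ^ k * \<beta> \<in> padic_ball 0 0" "q \<in> padic_ball \<beta> n" "w \<in> padic_ball 1 (n + k)"
  shows "q * w \<in> padic_ball \<beta> n"
proof -
  have "padic_prime ^ 0 * (1 :: 'p padic) \<in> padic_ball 0 0"
    by (simp add: one_in_padic_ball_0)
  moreover have "w \<in> padic_ball 1 0"
    using padic_ball_mono[OF _ assms(3)] by simp
  ultimately have "padic_prime ^ 0 * w \<in> padic_ball 0 0"
    by (rule padic_ball_bounded)
  then have "(q - \<beta>) * w \<in> padic_ball 0 (n + 0)"
    using assms(2) unfolding padic_ball_iff[of _ \<beta>] by (intro padic_ball_0_mult) auto
  moreover have "\<beta> * (w - 1) \<in> padic_ball 0 n"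
    using assms(3) unfolding padic_ball_iff[of _ 1] by (rule padic_ball_0_mult_bounded[OF assms(1)])
  ultimately have "(q - \<beta>) * w + \<beta> * (w - 1) \<in> padic_ball 0 n"
    by (intro padic_ball_0_add) auto
  then show ?thesis
    unfolding padic_ball_iff[of _ \<beta>] by (simp add: algebra_simps)
qed

lemma padic_ball_shift_div_prime_power:
  fixes t t0 a :: "'p::prime_card padic"
  assumes "t \<in> padic_ball (t0 + padic_prime ^ m * a) (n + m)"
  shows "(t - t0) / padic_prime ^ m \<in> padic_ball a n"
proof -
  have "(t - t0) / padic_prime ^ m - a = (t - (t0 + padic_prime ^ m * a)) / padic_prime ^ m"
    by (simp add: field_simps)
  also have "\<dots> \<in> padic_ball 0 n"
    using assms unfolding padic_ball_iff[of _ "t0 + padic_prime ^ m * a"]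
    by (rule padic_ball_0_div_prime_power)
  finally show ?thesis
    unfolding padic_ball_iff[of _ a] .
qed

lemma padic_ball_near_center:
  fixes t t0 a :: "'p::prime_card padic"
  assumes "padic_prime ^ k * a \<in> padic_ball 0 0" "(t - t0) / padic_prime ^ (N + k) \<in> padic_ball a 0"
  shows "t \<in> padic_ball t0 N"
proof -
  have "padic_prime ^ k * ((t - t0) / padic_prime ^ (N + k)) \<in> padic_ball 0 0"
    using assms by (rule padic_ball_bounded)
  then have "padic_prime ^ N * (padic_prime ^ k * ((t - t0) / padic_prime ^ (N + k))) \<in> padic_ball 0 (N + 0)"
    by (intro padic_ball_0_mult padic_prime_power_in_padic_ball_0)
  then show ?thesis
    unfolding padic_ball_iff[of _ t0] by (simp add: power_add)
qed

text \<open>With \<open>c = p\<^sup>N\<^sup>+\<^sup>k\<close> small, take \<open>t\<^sub>1 \<approx> t\<^sub>0 + c \<beta>\<close> and \<open>t\<^sub>2 \<approx> t\<^sub>0 + c\<close>; then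
  \<open>f t\<^sub>1 / f t\<^sub>2 = q\<^sub>1 w\<close> with \<open>q\<^sub>1 = (t\<^sub>1 - t\<^sub>0) / c \<approx> \<beta>\<close> and \<open>w\<close> a principal unit.\<close>

lemma ratios_near_simple_root:
  fixes g :: "'p::prime_card padic poly" and t0 \<beta> :: "'p padic"
  assumes "poly g t0 \<noteq> 0" and f: "\<And>t. f t = (t - t0) * poly g t"
  shows "\<exists>K u1 u2. f (of_int u2 / padic_prime ^ K) \<noteq> 0 \<and>
    f (of_int u1 / padic_prime ^ K) / f (of_int u2 / padic_prime ^ K) \<in> padic_ball \<beta> n"
proof -
  obtain k where k: "padic_prime ^ k * \<beta> \<in> padic_ball 0 0"
    using padic_bounded by blast
  have k1: "padic_prime ^ k * 1 \<in> padic_ball 0 0"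
    using padic_ball_mono[of 0 k, OF _ padic_prime_power_in_padic_ball_0] by simp
  define E where "E = Suc (n + k)"
  obtain N where N: "\<forall>t \<in> padic_ball t0 N. poly g t / poly g t0 \<in> padic_ball 1 E"
    using poly_quotient_near_nonroot[OF assms(1)] by blast
  define c :: "'p padic" where "c = padic_prime ^ (N + k)"
  obtain K u1 u2 where
    "of_int u1 / padic_prime ^ K \<in> padic_ball (t0 + c * \<beta>) (E + (N + k))" (is "?t1 \<in> _")
    "of_int u2 / padic_prime ^ K \<in> padic_ball (t0 + c * 1) (E + (N + k))" (is "?t2 \<in> _")
    using padic_approx_pair_int_div_prime_power by blast
  then have q1: "(?t1 - t0) / c \<in> padic_ball \<beta> E" and q2: "(?t2 - t0) / c \<in> padic_ball 1 E"
    unfolding c_def by (auto intro: padic_ball_shift_div_prime_power)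
  define w1 where "w1 = poly g ?t1 / poly g t0"
  define w2 where "w2 = poly g ?t2 / poly g t0"
  have "?t1 \<in> padic_ball t0 N"
    by (rule padic_ball_near_center[OF k]) (use padic_ball_mono[OF _ q1] in \<open>simp add: c_def\<close>)
  moreover have "?t2 \<in> padic_ball t0 N"
    by (rule padic_ball_near_center[OF k1]) (use padic_ball_mono[OF _ q2] in \<open>simp add: c_def\<close>)
  ultimately have w1: "w1 \<in> padic_ball 1 E" and w2: "w2 \<in> padic_ball 1 E"
    unfolding w1_def w2_def using N by auto
  have "(?t2 - t0) / c \<noteq> 0" "w2 \<noteq> 0"
    using q2 w2 unfolding E_def by (auto dest: padic_ball_1_inverse(1))
  then have "f ?t2 \<noteq> 0"
    using assms(1) by (simp add: f w2_def c_def)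
  moreover have "f ?t1 / f ?t2 = (?t1 - t0) / c * (w1 * inverse ((?t2 - t0) / c * w2))"
  proof -
    have "?t2 - t0 \<noteq> 0" "poly g ?t2 \<noteq> 0" "c \<noteq> 0"
      using \<open>(?t2 - t0) / c \<noteq> 0\<close> \<open>w2 \<noteq> 0\<close> by (auto simp: w2_def c_def)
    with assms(1) show ?thesis
      unfolding f w1_def w2_def by (simp add: field_simps del: of_int_diff)
  qed
  moreover have "w1 * inverse ((?t2 - t0) / c * w2) \<in> padic_ball 1 (n + k)"
    using w1 q2 w2 padic_ball_mono[of "n + k" E] unfolding E_def
    by (meson le_SucI order_refl padic_ball_1_inverse(2) padic_ball_1_mult)
  then have "(?t1 - t0) / c * (w1 * inverse ((?t2 - t0) / c * w2)) \<in> padic_ball \<beta> n"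
    using padic_ball_mono[of n E, OF _ q1] unfolding E_def
    by (intro padic_ball_mult_principal_unit[OF k]) auto
  ultimately show ?thesis
    by metis
qed

lemma line_ratios_in_ratio_set:
  fixes F :: "int mpoly" and f :: "'p::prime_card padic \<Rightarrow> 'p padic"
  assumes "homogeneous d F" "\<forall>i>r. a i = 0" "j \<le> r" "c \<noteq> 0"
    and line: "\<And>t. mpoly_eval (Poly_Mapping.map of_int F) ((\<lambda>i. of_int (a i))(j := of_int (a j) + t)) = c * f t"
    and "f (of_int u2 / padic_prime ^ K) \<noteq> 0"
  shows "f (of_int u1 / padic_prime ^ K) / f (of_int u2 / padic_prime ^ K) \<in> ratio_set r F"
proof -
  define y where "y u = (\<lambda>i. int CARD('p) ^ K * a i)(j := int CARD('p) ^ K * a j + u)" for u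
  have F_y: "of_int (mpoly_eval F (y u)) = (padic_prime ^ K) ^ d * (c * f (of_int u / padic_prime ^ K))" for u
    using mpoly_eval_scaled_int_point[OF assms(1), of "int CARD('p) ^ K", where 'a="'p padic"]
    by (simp add: y_def line)
  have "mpoly_eval F (y u2) \<noteq> 0"
    using F_y[of u2] assms(4,6) by auto
  moreover have "\<forall>i>r. y u i = 0" for u
    using assms(2,3) by (simp add: y_def)
  ultimately have "(of_int (mpoly_eval F (y u1)) / of_int (mpoly_eval F (y u2)) :: 'p padic) \<in> ratio_set r F"
    unfolding ratio_set_def by blast
  moreover have "of_int (mpoly_eval F (y u1)) / of_int (mpoly_eval F (y u2))
      = f (of_int u1 / padic_prime ^ K) / f (of_int u2 / padic_prime ^ K)"
    using \<open>c \<noteq> 0\<close> by (simp add: F_y)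
  ultimately show ?thesis
    by simp
qed

theorem lemma2p10:
  fixes r :: nat
    and F :: "int mpoly"
    and L :: "'p::prime_card padic mpoly"
  assumes "integral_form r F"
    and "linear_form r L" and "L \<noteq> 0"
    and "dvd_in r L (Poly_Mapping.map of_int F)"
    and "\<not> dvd_in r (L ^ 2) (Poly_Mapping.map of_int F)"
  shows "padic_dense (ratio_set r F :: 'p padic set)"
proof -
  obtain d where hom: "homogeneous d F"
    using assms(1) unfolding integral_form_def by blast
  obtain a j c t0 g where a: "\<forall>i>r. a i = 0" and "j \<le> r" "c \<noteq> 0" "poly g t0 \<noteq> 0"
    and line: "\<And>t. mpoly_eval (Poly_Mapping.map of_int F :: 'p padic mpoly)
      ((\<lambda>i. of_int (a i))(j := of_int (a j) + t)) = c * ((t - t0) * poly g t)"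
    using simple_linear_factor_along_line[OF assms(2-5)] by blast
  define f where "f t = (t - t0) * poly g t" for t
  show ?thesis
    unfolding padic_dense_def
  proof (intro allI)
    fix \<beta> :: "'p padic" and n
    obtain K u1 u2 where "f (of_int u2 / padic_prime ^ K) \<noteq> 0"
      and "f (of_int u1 / padic_prime ^ K) / f (of_int u2 / padic_prime ^ K) \<in> padic_ball \<beta> n"
      using ratios_near_simple_root[OF \<open>poly g t0 \<noteq> 0\<close> f_def] by blast
    then show "ratio_set r F \<inter> padic_ball \<beta> n \<noteq> {}"
      using line_ratios_in_ratio_set[OF hom a \<open>j \<le> r\<close> \<open>c \<noteq> 0\<close> line[folded f_def]] by blast
  qed
qed

end
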